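(* Let $r\in[0,1]$ and let $a\in A$. If the pure state $\delta_a$ (all mass on type $a$) is Lyapunov stable under the recombinator dynamics with recombination rate $r$, then: (1) $u(a,a)\ge u((a'_d,a_{-d}),a)$ for every dimension $d\in D$ and every trait $a'_d\in A_d$; and (2) $u(a,a)\ge(1-r)\,u(a',a)$ for every type $a'\in A$.
   Context: Setting: $D=\{1,\dots,|D|\}$ finite, $|D|\ge2$; finite trait sets $A_d$; types $A=\prod_dA_d$, $a=(a_d,a_{-d})$ with $a_{-d}\in\prod_{d'\ne d}A_{d'}$. Payoff $u:A\times A\to\mathbb{R}_{>0}$, $u(a,a')$ being the payoff of type $a$ against type $a'$. For a state $x\in\Delta(A)$: $u_x(a)=\sum_{a'}x(a')u(a,a')$, $u_x=\sum_ax(a)u_x(a)$, $x(a_d)=\sum_{a_{-d}}x(a_d,a_{-d})$, and for $x(a_d)>0$, $u_x(a_d)=\frac1{x(a_d)}\sum_{a_{-d}}x(a_d,a_{-d})u_x(a_d,a_{-d})$ (with $x(a_d)u_x(a_d):=\sum_{a_{-d}}x(a_d,a_{-d})u_x(a_d,a_{-d})$). Recombinator dynamics with rate $r$: $\dot x(a)=(1-r)\frac{x(a)u_x(a)}{u_x}+r\prod_{a_d\in a}\frac{x(a_d)u_x(a_d)}{u_x}-x(a)$. A state $x^*$ is Lyapunov stable if for every neighbourhood $U$ of $x^*$ there is a neighbourhood $V\subseteq U$ with $x^0\in V\Rightarrow x^t\in U$ for all $t>0$. *)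

theory Defs
  imports "HOL-Analysis.Analysis"
begin

text \<open>Dimensions are the elements of a finite type 'd; traits live in a finite type 't,
  with A d the trait set of dimension d.\<close>

definition types :: "('d \<Rightarrow> 't set) \<Rightarrow> ('d \<Rightarrow> 't) set" where
  "types A = {a. \<forall>d. a d \<in> A d}"

definition state_simplex :: "('d \<Rightarrow> 't set) \<Rightarrow> (('d \<Rightarrow> 't) \<Rightarrow> real) set" where
  "state_simplex A = {x. (\<forall>b. x b \<ge> 0) \<and> (\<forall>b. b \<notin> types A \<longrightarrow> x b = 0)
                   \<and> (\<Sum>b\<in>types A. x b) = 1}"

definition payoff_vs :: "('d \<Rightarrow> 't set) \<Rightarrow> (('d \<Rightarrow> 't) \<Rightarrow> ('d \<Rightarrow> 't) \<Rightarrow> real)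
    \<Rightarrow> (('d \<Rightarrow> 't) \<Rightarrow> real) \<Rightarrow> ('d \<Rightarrow> 't) \<Rightarrow> real" where
  "payoff_vs A u x a = (\<Sum>a'\<in>types A. x a' * u a a')"

definition mean_payoff :: "('d \<Rightarrow> 't set) \<Rightarrow> (('d \<Rightarrow> 't) \<Rightarrow> ('d \<Rightarrow> 't) \<Rightarrow> real)
    \<Rightarrow> (('d \<Rightarrow> 't) \<Rightarrow> real) \<Rightarrow> real" where
  "mean_payoff A u x = (\<Sum>a\<in>types A. x a * payoff_vs A u x a)"

text \<open>x(a_d) u_x(a_d) = sum over a_{-d} of x(a_d,a_{-d}) u_x(a_d,a_{-d})\<close>
definition trait_weighted_payoff :: "('d \<Rightarrow> 't set) \<Rightarrow> (('d \<Rightarrow> 't) \<Rightarrow> ('d \<Rightarrow> 't) \<Rightarrow> real)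
    \<Rightarrow> (('d \<Rightarrow> 't) \<Rightarrow> real) \<Rightarrow> 'd \<Rightarrow> 't \<Rightarrow> real" where
  "trait_weighted_payoff A u x d t = (\<Sum>a\<in>{a\<in>types A. a d = t}. x a * payoff_vs A u x a)"

definition recomb_field :: "('d \<Rightarrow> 't set) \<Rightarrow> (('d \<Rightarrow> 't) \<Rightarrow> ('d \<Rightarrow> 't) \<Rightarrow> real) \<Rightarrow> real
    \<Rightarrow> (('d \<Rightarrow> 't) \<Rightarrow> real) \<Rightarrow> ('d \<Rightarrow> 't) \<Rightarrow> real" where
  "recomb_field A u r x a =
     (1 - r) * (x a * payoff_vs A u x a / mean_payoff A u x)
     + r * (\<Prod>d\<in>UNIV. trait_weighted_payoff A u x d (a d) / mean_payoff A u x)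
     - x a"

definition recomb_solution :: "('d \<Rightarrow> 't set) \<Rightarrow> (('d \<Rightarrow> 't) \<Rightarrow> ('d \<Rightarrow> 't) \<Rightarrow> real) \<Rightarrow> real
    \<Rightarrow> (real \<Rightarrow> ('d \<Rightarrow> 't) \<Rightarrow> real) \<Rightarrow> bool" where
  "recomb_solution A u r x \<longleftrightarrow>
     (\<forall>b. \<forall>t\<ge>0. ((\<lambda>s. x s b) has_real_derivative recomb_field A u r (x t) b) (at t within {0..}))"

text \<open>Lyapunov stability of a state (neighbourhoods in the product topology,
  initial states taken in the state_simplex).\<close>
definition lyapunov_stable :: "('d \<Rightarrow> 't set) \<Rightarrow> (('d \<Rightarrow> 't) \<Rightarrow> ('d \<Rightarrow> 't) \<Rightarrow> real) \<Rightarrow> real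
    \<Rightarrow> (('d \<Rightarrow> 't) \<Rightarrow> real) \<Rightarrow> bool" where
  "lyapunov_stable A u r xs \<longleftrightarrow>
     (\<forall>U. open U \<and> xs \<in> U \<longrightarrow>
        (\<exists>V. open V \<and> xs \<in> V \<and> V \<subseteq> U \<and>
           (\<forall>x. recomb_solution A u r x \<and> x 0 \<in> V \<inter> state_simplex A \<longrightarrow> (\<forall>t>0. x t \<in> U))))"

definition pure_state :: "('d \<Rightarrow> 't) \<Rightarrow> ('d \<Rightarrow> 't) \<Rightarrow> real" where
  "pure_state a = (\<lambda>b. if b = a then 1 else 0)"

end

theory Submission
  imports Defs
begin

text \<open>If one of the inequalities fails, some mutant \<open>a'\<close> invades the pure state of \<open>a\<close>.
  Near that state the relative fitness \<open>u\<^sub>x(a') / u\<^sub>x\<close> of \<open>a'\<close> is close to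
  \<open>u(a', a) / u(a, a)\<close>. Selection passes on a fraction \<open>1 - r\<close> of it; a mutant differing
  from \<open>a\<close> in a single trait loses nothing to recombination, because all other marginals are
  concentrated at \<open>a\<close>, so the product of marginals reproduces \<open>a'\<close>. Either way
  \<open>x(a')' \<ge> \<delta> x(a')\<close> with \<open>\<delta> > 0\<close> as long as \<open>x(a) > 1 - \<epsilon>\<close>, so a solution starting
  at a small mixture of \<open>a\<close> and \<open>a'\<close> cannot stay near the pure state.

  Such solutions must actually exist. The field has the form \<open>\<Phi>(x) - x\<close> with \<open>\<Phi>\<close> mapping
  the simplex into itself; with \<open>P\<close> the projection onto the simplex, the globally Lipschitz
  equation \<open>x' = \<Phi>(P x) - x\<close> has global solutions by Picard iteration, and they stay in
  the simplex, where they solve the original equation.\<close>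

section \<open>Global solutions of Lipschitz differential equations\<close>

lemma integral_has_vector_derivative_atLeast:
  fixes g :: "real \<Rightarrow> 'a::banach"
  assumes "continuous_on UNIV g" and "0 \<le> t"
  shows "((\<lambda>u. integral {0..u} g) has_vector_derivative g t) (at t within {0..})"
proof -
  have "((\<lambda>u. integral {0..u} g) has_vector_derivative g t) (at t within {0..t+1})"
    by (rule integral_has_vector_derivative) (auto intro: continuous_on_subset assms)
  moreover have "at t within {0..t+1} = at t within {0..}"
    by (rule at_within_nhd[of _ "{..<t+1}"]) auto
  ultimately show ?thesis by simp
qed

lemma has_integral_exp_scaled:
  fixes K T :: real
  assumes "0 < K" and "0 \<le> T"
  shows "((\<lambda>s. exp (K * s)) has_integral (exp (K * T) - 1) / K) {0..T}"
proof -
  have "((\<lambda>s. exp (K * s)) has_integral exp (K * T) / K - exp (K * 0) / K) {0..T}"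
    by (rule fundamental_theorem_of_calculus[OF assms(2)])
      (use assms(1) in \<open>auto intro!: derivative_eq_intros
        simp: has_real_derivative_iff_has_vector_derivative[symmetric]\<close>)
  then show ?thesis by (simp add: diff_divide_distrib)
qed

lemma exp_damped_growth_bound:
  fixes K u P Q R :: real
  assumes "0 < K" "0 \<le> u" "0 \<le> P" "0 \<le> Q" "0 \<le> R"
  shows "exp (- K * u) * (P + u * Q + R * ((exp (K * u) - 1) / K)) \<le> P + Q / K + R / K"
proof -
  define E where "E = exp (K * u)"
  have E: "1 + K * u \<le> E" "0 < E" unfolding E_def by simp_all
  have E1: "1 \<le> E" using E assms by (smt (verit) mult_nonneg_nonneg)
  have "P / E \<le> P" using divide_left_mono[of 1 E P] E1 assms by simp
  moreover have "u * Q / E \<le> Q / K"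
    using mult_left_mono[OF E(1), of Q] E(2) assms by (simp add: field_simps)
  moreover have "R * ((E - 1) / K) / E \<le> R / K"
    using E assms by (simp add: field_simps mult_left_mono)
  moreover have "exp (- K * u) = 1 / E" unfolding E_def by (simp add: exp_minus inverse_eq_divide)
  ultimately show ?thesis unfolding E_def[symmetric] by (simp add: add_divide_distrib)
qed

text \<open>Global existence for a globally Lipschitz field, by Bielecki's trick: for
  \<open>x t = exp (weight * t) *\<^sub>R y t\<close> the Picard map is a contraction of the bounded continuous
  functions \<open>y\<close> in the sup norm, on the whole half-line at once.\<close>

locale lipschitz_vector_field =
  fixes f :: "'a::banach \<Rightarrow> 'a" and L :: real
  assumes lipschitz: "L-lipschitz_on UNIV f"
begin

definition weight :: real where "weight = 2 * L + 1"

lemma lipschitz_constant_nonneg: "0 \<le> L"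
  using lipschitz lipschitz_on_nonneg by blast

lemma weight_pos: "0 < weight"
  using lipschitz_constant_nonneg by (simp add: weight_def)

lemma norm_diff_le: "norm (f p - f q) \<le> L * norm (p - q)"
  using lipschitz_onD[OF lipschitz, of p q] by (simp add: dist_norm)

definition picard_integral :: "(real \<Rightarrow>\<^sub>C 'a) \<Rightarrow> real \<Rightarrow> 'a" where
  "picard_integral y u = integral {0..u} (\<lambda>s. f (exp (weight * s) *\<^sub>R y s))"

lemma continuous_on_picard_integrand:
  "continuous_on UNIV (\<lambda>s. f (exp (weight * s) *\<^sub>R apply_bcontfun y s))"
  by (intro continuous_on_compose2[OF lipschitz_on_continuous_on[OF lipschitz]] continuous_intros)
    auto

lemma picard_integral_has_vector_derivative:
  "0 \<le> u \<Longrightarrow> (picard_integral y has_vector_derivative f (exp (weight * u) *\<^sub>R y u))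
     (at u within {0..})"
  unfolding picard_integral_def
  by (rule integral_has_vector_derivative_atLeast[OF continuous_on_picard_integrand])

lemma continuous_on_picard_integral: "continuous_on {0..} (picard_integral y)"
  using picard_integral_has_vector_derivative
  by (metis atLeast_iff continuous_on_eq_continuous_within has_vector_derivative_continuous)

lemma picard_integral_dist_le:
  assumes "0 \<le> u"
  shows "norm (picard_integral y u - picard_integral w u)
    \<le> L * dist y w * ((exp (weight * u) - 1) / weight)"
proof -
  let ?g = "\<lambda>(y :: real \<Rightarrow>\<^sub>C 'a) s. f (exp (weight * s) *\<^sub>R y s)"
  have int: "?g y integrable_on {0..u}" for y :: "real \<Rightarrow>\<^sub>C 'a"
    by (rule integrable_continuous_real,
        rule continuous_on_subset[OF continuous_on_picard_integrand]) simp
  have bound: "((\<lambda>s. L * dist y w * exp (weight * s)) has_integral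
      L * dist y w * ((exp (weight * u) - 1) / weight)) {0..u}"
    by (rule has_integral_mult_right[OF has_integral_exp_scaled[OF weight_pos assms]])
  have pointwise: "norm (?g y s - ?g w s) \<le> L * dist y w * exp (weight * s)" for s
  proof -
    have "norm (?g y s - ?g w s) \<le> L * (exp (weight * s) * dist (y s) (w s))"
      using norm_diff_le[of "exp (weight * s) *\<^sub>R y s" "exp (weight * s) *\<^sub>R w s"]
      by (simp add: dist_norm scaleR_diff_right[symmetric])
    also have "\<dots> \<le> L * (exp (weight * s) * dist y w)"
      using dist_bounded lipschitz_constant_nonneg by (intro mult_left_mono) auto
    finally show ?thesis by (simp add: algebra_simps)
  qed
  have "picard_integral y u - picard_integral w u = integral {0..u} (\<lambda>s. ?g y s - ?g w s)"
    unfolding picard_integral_def by (rule integral_diff[symmetric]) (auto intro: int)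
  also have "norm \<dots> \<le> integral {0..u} (\<lambda>s. L * dist y w * exp (weight * s))"
    using bound pointwise by (intro integral_norm_bound_integral integrable_diff int) auto
  also have "\<dots> = L * dist y w * ((exp (weight * u) - 1) / weight)"
    using integral_unique[OF bound] .
  finally show ?thesis .
qed

lemma picard_integral_norm_le:
  assumes "0 \<le> u"
  shows "norm (picard_integral y u)
    \<le> u * norm (f 0) + L * norm y * ((exp (weight * u) - 1) / weight)"
proof -
  have "picard_integral 0 u = u *\<^sub>R f 0"
    using assms by (simp add: picard_integral_def)
  then show ?thesis
    using picard_integral_dist_le[OF assms, of y 0] assms norm_triangle_ineq[of
        "picard_integral y u - picard_integral 0 u" "picard_integral 0 u"]
    by (simp add: dist_norm)
qed

definition picard_function :: "'a \<Rightarrow> (real \<Rightarrow>\<^sub>C 'a) \<Rightarrow> real \<Rightarrow> 'a" where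
  "picard_function x0 y t = exp (- weight * max 0 t) *\<^sub>R (x0 + picard_integral y (max 0 t))"

lemma picard_function_bcontfun: "picard_function x0 y \<in> bcontfun"
proof (rule bcontfun_normI)
  show "continuous_on UNIV (picard_function x0 y)"
    unfolding picard_function_def
    by (intro continuous_intros continuous_on_compose2[OF continuous_on_picard_integral])
      (auto simp: max_def)
  fix t :: real
  define u where "u = max 0 t"
  have u: "0 \<le> u" by (simp add: u_def)
  have "norm (picard_function x0 y t) = exp (- weight * u) * norm (x0 + picard_integral y u)"
    by (simp add: picard_function_def u_def)
  also have "\<dots> \<le> exp (- weight * u) *
      (norm x0 + (u * norm (f 0) + L * norm y * ((exp (weight * u) - 1) / weight)))"
    by (intro mult_left_mono order.trans[OF norm_triangle_ineq] add_left_mono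
        picard_integral_norm_le u) simp
  also have "\<dots> \<le> norm x0 + norm (f 0) / weight + L * norm y / weight"
    using exp_damped_growth_bound[OF weight_pos u, of "norm x0" "norm (f 0)" "L * norm y"]
      lipschitz_constant_nonneg by (simp add: add.assoc)
  finally show "norm (picard_function x0 y t)
    \<le> norm x0 + norm (f 0) / weight + L * norm y / weight" .
qed

definition picard_map :: "'a \<Rightarrow> (real \<Rightarrow>\<^sub>C 'a) \<Rightarrow> real \<Rightarrow>\<^sub>C 'a" where
  "picard_map x0 y = Bcontfun (picard_function x0 y)"

lemma apply_picard_map: "apply_bcontfun (picard_map x0 y) = picard_function x0 y"
  unfolding picard_map_def using picard_function_bcontfun by (simp add: Bcontfun_inverse)

lemma picard_map_contraction: "dist (picard_map x0 y) (picard_map x0 w) \<le> (L / weight) * dist y w"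
proof (rule dist_bound)
  fix t :: real
  define u where "u = max 0 t"
  have u: "0 \<le> u" by (simp add: u_def)
  have "dist (picard_map x0 y t) (picard_map x0 w t)
      = exp (- weight * u) * norm (picard_integral y u - picard_integral w u)"
    by (simp add: apply_picard_map picard_function_def u_def dist_norm scaleR_diff_right[symmetric])
  also have "\<dots> \<le> exp (- weight * u) *
      (0 + u * 0 + L * dist y w * ((exp (weight * u) - 1) / weight))"
    using picard_integral_dist_le[OF u, of y w] by (intro mult_left_mono) auto
  also have "\<dots> \<le> 0 + 0 / weight + L * dist y w / weight"
    using lipschitz_constant_nonneg by (intro exp_damped_growth_bound[OF weight_pos u]) auto
  finally show "dist (picard_map x0 y t) (picard_map x0 w t) \<le> L / weight * dist y w" by simp
qed

theorem solution_exists: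
  "\<exists>x. x 0 = x0 \<and> (\<forall>t\<ge>0. (x has_vector_derivative f (x t)) (at t within {0..}))"
proof -
  have "0 \<le> L / weight" "L / weight < 1"
    using lipschitz_constant_nonneg weight_pos by (auto simp: weight_def field_simps)
  from banach_fix_type[OF this, of "picard_map x0"] picard_map_contraction
  obtain y where y: "picard_map x0 y = y" by metis
  define x where "x t = x0 + picard_integral y t" for t
  have "y t = exp (- weight * t) *\<^sub>R x t" if "0 \<le> t" for t
    using arg_cong[OF y, of "\<lambda>z. apply_bcontfun z t"] that
    by (simp add: apply_picard_map picard_function_def x_def)
  then have "f (exp (weight * t) *\<^sub>R y t) = f (x t)" if "0 \<le> t" for t
    using that by (simp add: exp_minus[symmetric] exp_add[symmetric])
  moreover have "(x has_vector_derivative f (exp (weight * t) *\<^sub>R y t)) (at t within {0..})"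
    if "0 \<le> t" for t
    using picard_integral_has_vector_derivative[OF that, of y]
    unfolding x_def by (subst add.commute) (simp add: has_vector_derivative_add_const)
  ultimately show ?thesis
    by (intro exI[of _ x]) (auto simp: x_def picard_integral_def)
qed

end

section \<open>Scalar differential inequalities\<close>

lemma nondecreasing_of_nonneg_derivative_atLeast:
  fixes h :: "real \<Rightarrow> real"
  assumes "\<And>s. 0 \<le> s \<Longrightarrow> (h has_real_derivative D s) (at s within {0..})"
    and "\<And>s. 0 \<le> s \<Longrightarrow> 0 \<le> D s" and "0 \<le> t"
  shows "h 0 \<le> h t"
proof (rule DERIV_nonneg_imp_increasing_open[OF \<open>0 \<le> t\<close>])
  fix s :: real assume s: "0 < s" "s < t"
  have "at s within {0..} = at s" by (rule at_within_interior) (use s in simp)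
  then show "\<exists>y. (h has_real_derivative y) (at s) \<and> 0 \<le> y"
    using assms(1,2)[of s] s by auto
next
  have "continuous_on {0..} h"
    unfolding continuous_on_eq_continuous_within using assms(1) DERIV_continuous by fastforce
  then show "continuous_on {0..t} h" by (rule continuous_on_subset) auto
qed

lemma exp_weighted_lower_bound:
  fixes g :: "real \<Rightarrow> real"
  assumes "\<And>s. 0 \<le> s \<Longrightarrow> (g has_real_derivative D s) (at s within {0..})"
    and "\<And>s. 0 \<le> s \<Longrightarrow> 0 \<le> D s + c * g s" and "0 \<le> t"
  shows "g 0 \<le> exp (c * t) * g t"
proof -
  have "(\<lambda>s. exp (c * s) * g s) 0 \<le> (\<lambda>s. exp (c * s) * g s) t"
  proof (rule nondecreasing_of_nonneg_derivative_atLeast[OF _ _ \<open>0 \<le> t\<close>])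
    fix s :: real assume s: "0 \<le> s"
    show "((\<lambda>s. exp (c * s) * g s) has_real_derivative exp (c * s) * (D s + c * g s))
      (at s within {0..})"
      by (rule derivative_eq_intros assms(1) s refl | simp add: algebra_simps)+
    show "0 \<le> exp (c * s) * (D s + c * g s)" using assms(2)[OF s] by simp
  qed
  then show ?thesis by simp
qed

lemma exists_gt_one_of_exponential_growth:
  fixes g :: "real \<Rightarrow> real"
  assumes "\<And>s. 0 \<le> s \<Longrightarrow> (g has_real_derivative D s) (at s within {0..})"
    and "\<And>s. 0 \<le> s \<Longrightarrow> \<delta> * g s \<le> D s" and "0 < \<delta>" and "0 < g 0"
  shows "\<exists>t\<ge>0. 1 < g t"
proof -
  define T where "T = 1 / (\<delta> * g 0)"
  have T: "0 \<le> T" "\<delta> * T = 1 / g 0" using assms(3,4) by (simp_all add: T_def)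
  have "0 \<le> D s + - \<delta> * g s" if "0 \<le> s" for s using assms(2)[OF that] by simp
  from exp_weighted_lower_bound[where c = "- \<delta>", OF assms(1) this T(1)]
  have "g 0 \<le> exp (- \<delta> * T) * g T" .
  then have "g 0 * exp (\<delta> * T) \<le> g T" by (simp add: exp_minus field_simps)
  moreover have "g 0 * (1 + \<delta> * T) \<le> g 0 * exp (\<delta> * T)"
    using assms(4) by (intro mult_left_mono) simp_all
  ultimately have "1 < g T" using T(2) assms(4) by (simp add: field_simps)
  then show ?thesis using T(1) by blast
qed

lemma relaxation_ode_solution:
  fixes g :: "real \<Rightarrow> real"
  assumes "\<And>s. 0 \<le> s \<Longrightarrow> (g has_real_derivative C - g s) (at s within {0..})" and "0 \<le> t"
  shows "g t = C + exp (- t) * (g 0 - C)"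
proof -
  have "g 0 - C \<le> exp (1 * t) * (g t - C)"
    by (rule exp_weighted_lower_bound[where D = "\<lambda>s. C - g s", OF _ _ \<open>0 \<le> t\<close>])
      (auto intro!: derivative_eq_intros assms(1))
  moreover have "C - g 0 \<le> exp (1 * t) * (C - g t)"
    by (rule exp_weighted_lower_bound[where D = "\<lambda>s. - (C - g s)", OF _ _ \<open>0 \<le> t\<close>])
      (auto intro!: derivative_eq_intros assms(1))
  ultimately have "exp t * (g t - C) = g 0 - C"
    by (simp add: algebra_simps)
  then have "exp (- t) * (exp t * (g t - C)) = exp (- t) * (g 0 - C)"
    by simp
  then show ?thesis by (simp add: exp_minus field_simps)
qed

section \<open>Bounded Lipschitz functions\<close>

definition bounded_lipschitz_on :: "'a::metric_space set \<Rightarrow> ('a \<Rightarrow> real) \<Rightarrow> bool" where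
  "bounded_lipschitz_on X f \<longleftrightarrow> (\<exists>L. L-lipschitz_on X f) \<and> (\<exists>M. \<forall>x\<in>X. \<bar>f x\<bar> \<le> M)"

lemma bounded_lipschitz_onE:
  assumes "bounded_lipschitz_on X f"
  obtains L M where "L-lipschitz_on X f" "0 \<le> M" "\<And>x. x \<in> X \<Longrightarrow> \<bar>f x\<bar> \<le> M"
proof -
  obtain L M where "L-lipschitz_on X f" "\<And>x. x \<in> X \<Longrightarrow> \<bar>f x\<bar> \<le> M"
    using assms unfolding bounded_lipschitz_on_def by blast
  then show ?thesis using that[of L "max M 0"] by force
qed

lemma bounded_lipschitz_on_const: "bounded_lipschitz_on X (\<lambda>x. c)"
  unfolding bounded_lipschitz_on_def by (auto intro: lipschitz_on_constant)

lemma bounded_lipschitz_on_add: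
  assumes "bounded_lipschitz_on X f" "bounded_lipschitz_on X g"
  shows "bounded_lipschitz_on X (\<lambda>x. f x + g x)"
proof -
  obtain L M L' M' where "L-lipschitz_on X f" "\<And>x. x \<in> X \<Longrightarrow> \<bar>f x\<bar> \<le> M"
    "L'-lipschitz_on X g" "\<And>x. x \<in> X \<Longrightarrow> \<bar>g x\<bar> \<le> M'"
    using assms by (metis bounded_lipschitz_onE)
  then show ?thesis unfolding bounded_lipschitz_on_def
    by (intro conjI exI[of _ "L + L'"] exI[of _ "M + M'"] lipschitz_on_add)
      (auto intro: abs_triangle_ineq[THEN order_trans] add_mono)
qed

lemma bounded_lipschitz_on_diff:
  assumes "bounded_lipschitz_on X f" "bounded_lipschitz_on X g"
  shows "bounded_lipschitz_on X (\<lambda>x. f x - g x)"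
proof -
  obtain L M L' M' where "L-lipschitz_on X f" "\<And>x. x \<in> X \<Longrightarrow> \<bar>f x\<bar> \<le> M"
    "L'-lipschitz_on X g" "\<And>x. x \<in> X \<Longrightarrow> \<bar>g x\<bar> \<le> M'"
    using assms by (metis bounded_lipschitz_onE)
  then show ?thesis unfolding bounded_lipschitz_on_def
    by (intro conjI exI[of _ "L + L'"] exI[of _ "M + M'"] lipschitz_on_diff)
      (auto intro: abs_triangle_ineq4[THEN order_trans] add_mono)
qed

lemma bounded_lipschitz_on_mult:
  assumes "bounded_lipschitz_on X f" "bounded_lipschitz_on X g"
  shows "bounded_lipschitz_on X (\<lambda>x. f x * g x)"
proof -
  obtain L M L' M' where L: "L-lipschitz_on X f" and M: "0 \<le> M" "\<And>x. x \<in> X \<Longrightarrow> \<bar>f x\<bar> \<le> M"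
    and L': "L'-lipschitz_on X g" and M': "0 \<le> M'" "\<And>x. x \<in> X \<Longrightarrow> \<bar>g x\<bar> \<le> M'"
    using assms by (metis bounded_lipschitz_onE)
  have "(M * L' + L * M')-lipschitz_on X (\<lambda>x. f x * g x)"
  proof (rule lipschitz_onI)
    fix x y assume x: "x \<in> X" and y: "y \<in> X"
    have "\<bar>f x * (g x - g y)\<bar> \<le> M * (L' * dist x y)"
      unfolding abs_mult using M(2)[OF x] lipschitz_onD[OF L' x y] M(1)
      by (intro mult_mono) (auto simp: dist_real_def)
    moreover have "\<bar>(f x - f y) * g y\<bar> \<le> (L * dist x y) * M'"
      unfolding abs_mult using M'(2)[OF y] lipschitz_onD[OF L x y] lipschitz_on_nonneg[OF L]
      by (intro mult_mono) (auto simp: dist_real_def)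
    moreover have "f x * g x - f y * g y = f x * (g x - g y) + (f x - f y) * g y"
      by (simp add: algebra_simps)
    ultimately show "dist (f x * g x) (f y * g y) \<le> (M * L' + L * M') * dist x y"
      unfolding dist_real_def by (smt (verit, best) distrib_right mult.assoc mult.commute)
  qed (use M(1) M'(1) lipschitz_on_nonneg[OF L] lipschitz_on_nonneg[OF L'] in simp)
  moreover have "\<forall>x\<in>X. \<bar>f x * g x\<bar> \<le> M * M'"
    using M M' by (auto simp: abs_mult intro!: mult_mono)
  ultimately show ?thesis unfolding bounded_lipschitz_on_def by blast
qed

lemma bounded_lipschitz_on_inverse:
  assumes "bounded_lipschitz_on X g" and "0 < c" and "\<And>x. x \<in> X \<Longrightarrow> c \<le> g x"
  shows "bounded_lipschitz_on X (\<lambda>x. 1 / g x)"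
proof -
  obtain L where L: "L-lipschitz_on X g" using assms(1) by (metis bounded_lipschitz_onE)
  have "(L / c\<^sup>2)-lipschitz_on X (\<lambda>x. 1 / g x)"
  proof (rule lipschitz_onI)
    fix x y assume x: "x \<in> X" and y: "y \<in> X"
    have g: "c \<le> g x" "c \<le> g y" using assms(3) x y by auto
    have "dist (1 / g x) (1 / g y) = \<bar>g y - g x\<bar> / (g x * g y)"
      using g assms(2) by (simp add: dist_real_def field_simps abs_div)
    also have "\<dots> \<le> (L * dist x y) / (c * c)"
      using lipschitz_onD[OF L y x] g assms(2) lipschitz_on_nonneg[OF L]
      by (intro frac_le mult_mono) (auto simp: dist_real_def dist_commute)
    finally show "dist (1 / g x) (1 / g y) \<le> L / c\<^sup>2 * dist x y"
      by (simp add: power2_eq_square)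
  qed (use lipschitz_on_nonneg[OF L] in simp)
  moreover have "\<bar>1 / g x\<bar> \<le> 1 / c" if "x \<in> X" for x
    using assms(2) assms(3)[OF that] by (simp add: frac_le)
  ultimately show ?thesis unfolding bounded_lipschitz_on_def by blast
qed

lemma bounded_lipschitz_on_divide:
  assumes "bounded_lipschitz_on X f" "bounded_lipschitz_on X g"
    and "0 < c" "\<And>x. x \<in> X \<Longrightarrow> c \<le> g x"
  shows "bounded_lipschitz_on X (\<lambda>x. f x / g x)"
  using bounded_lipschitz_on_mult[OF assms(1) bounded_lipschitz_on_inverse[OF assms(2-4)]]
  by simp

lemma bounded_lipschitz_on_sum:
  "(\<And>i. i \<in> S \<Longrightarrow> bounded_lipschitz_on X (f i)) \<Longrightarrow> bounded_lipschitz_on X (\<lambda>x. \<Sum>i\<in>S. f i x)"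
  by (induction S rule: infinite_finite_induct)
    (auto intro: bounded_lipschitz_on_const bounded_lipschitz_on_add)

lemma bounded_lipschitz_on_prod:
  "(\<And>i. i \<in> S \<Longrightarrow> bounded_lipschitz_on X (f i)) \<Longrightarrow> bounded_lipschitz_on X (\<lambda>x. \<Prod>i\<in>S. f i x)"
  by (induction S rule: infinite_finite_induct)
    (auto intro: bounded_lipschitz_on_const bounded_lipschitz_on_mult)

lemma bounded_lipschitz_on_vec_nth:
  fixes X :: "(real ^ 'n) set"
  assumes "\<And>x. x \<in> X \<Longrightarrow> \<bar>x $ i\<bar> \<le> M"
  shows "bounded_lipschitz_on X (\<lambda>x. x $ i)"
proof -
  have "1-lipschitz_on X (\<lambda>x. x $ i)"
    by (rule lipschitz_onI)
      (use component_le_norm_cart[of "_ - _" i] in \<open>simp_all add: dist_real_def dist_norm\<close>)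
  then show ?thesis unfolding bounded_lipschitz_on_def using assms by blast
qed

lemma lipschitz_on_vec_lambda:
  fixes h :: "'n::finite \<Rightarrow> 'a::metric_space \<Rightarrow> real"
  assumes "\<And>i. bounded_lipschitz_on X (h i)"
  shows "\<exists>L. L-lipschitz_on X (\<lambda>x. (\<chi> i. h i x) :: real ^ 'n)"
proof -
  obtain L where L: "\<And>i. (L i)-lipschitz_on X (h i)"
    using assms unfolding bounded_lipschitz_on_def by metis
  have "(\<Sum>i\<in>UNIV. L i)-lipschitz_on X (\<lambda>x. (\<chi> i. h i x) :: real ^ 'n)"
  proof (rule lipschitz_onI)
    fix x y assume x: "x \<in> X" and y: "y \<in> X"
    have "dist ((\<chi> i. h i x) :: real ^ 'n) (\<chi> i. h i y) \<le> (\<Sum>i\<in>UNIV. \<bar>h i x - h i y\<bar>)"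
      using norm_le_l1_cart[of "((\<chi> i. h i x) :: real ^ 'n) - (\<chi> i. h i y)"]
      by (simp add: dist_norm)
    also have "\<dots> \<le> (\<Sum>i\<in>UNIV. L i * dist x y)"
      using lipschitz_onD[OF L x y] by (intro sum_mono) (simp add: dist_real_def)
    finally show "dist ((\<chi> i. h i x) :: real ^ 'n) (\<chi> i. h i y) \<le> (\<Sum>i\<in>UNIV. L i) * dist x y"
      by (simp add: sum_distrib_right)
  qed (use L lipschitz_on_nonneg in \<open>blast intro: sum_nonneg\<close>)
  then show ?thesis by blast
qed

section \<open>States and payoffs\<close>

lemma finite_types [simp]: "finite (types (A :: 'd::finite \<Rightarrow> 't::finite set))"
  by (rule finite_subset[OF subset_UNIV]) simp

lemma PiE_UNIV_eq_types: "PiE UNIV A = types A"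
  by (auto simp: types_def PiE_def extensional_def)

lemma state_simplex_nonneg: "x \<in> state_simplex A \<Longrightarrow> 0 \<le> x b"
  by (simp add: state_simplex_def)

lemma state_simplex_outside: "x \<in> state_simplex A \<Longrightarrow> b \<notin> types A \<Longrightarrow> x b = 0"
  by (simp add: state_simplex_def)

lemma state_simplex_sum: "x \<in> state_simplex A \<Longrightarrow> (\<Sum>b\<in>types A. x b) = 1"
  by (simp add: state_simplex_def)

lemma state_simplex_sum_remove:
  "x \<in> state_simplex (A :: 'd::finite \<Rightarrow> 't::finite set) \<Longrightarrow> a \<in> types A
    \<Longrightarrow> (\<Sum>b\<in>types A - {a}. x b) = 1 - x a"
  using sum.remove[OF finite_types, of a A x] state_simplex_sum[of x A] by simp

lemma state_simplex_le_one:
  assumes "x \<in> state_simplex (A :: 'd::finite \<Rightarrow> 't::finite set)"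
  shows "x b \<le> 1"
proof (cases "b \<in> types A")
  case True
  have "x b \<le> (\<Sum>c\<in>types A. x c)"
    by (rule member_le_sum) (use True state_simplex_nonneg[OF assms] in auto)
  then show ?thesis using state_simplex_sum[OF assms] by simp
qed (simp add: state_simplex_outside[OF assms])

lemma types_nonempty_of_state_simplex: "x \<in> state_simplex A \<Longrightarrow> types A \<noteq> {}"
  using state_simplex_sum by fastforce

lemma sum_trait_weighted_payoff:
  fixes A :: "'d::finite \<Rightarrow> 't::finite set"
  shows "(\<Sum>t\<in>A d. trait_weighted_payoff A u x d t) = mean_payoff A u x"
  unfolding trait_weighted_payoff_def mean_payoff_def
  by (rule sum.group) (auto simp: types_def)

lemma recomb_field_outside_types:
  fixes A :: "'d::finite \<Rightarrow> 't set"
  assumes "x \<in> state_simplex A" and "b \<notin> types A"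
  shows "recomb_field A u r x b = 0"
proof -
  obtain d where "b d \<notin> A d" using assms(2) by (auto simp: types_def)
  then have "{a \<in> types A. a d = b d} = {}" by (auto simp: types_def) metis
  then have "trait_weighted_payoff A u x d (b d) = 0"
    unfolding trait_weighted_payoff_def by (metis sum.empty)
  then have "(\<Prod>d\<in>UNIV. trait_weighted_payoff A u x d (b d) / mean_payoff A u x) = 0"
    by (intro prod_zero) auto
  then show ?thesis using state_simplex_outside[OF assms] by (simp add: recomb_field_def)
qed

locale positive_game =
  fixes A :: "'d::finite \<Rightarrow> 't::finite set" and u :: "('d \<Rightarrow> 't) \<Rightarrow> ('d \<Rightarrow> 't) \<Rightarrow> real"
  assumes payoff_pos: "\<And>b c. b \<in> types A \<Longrightarrow> c \<in> types A \<Longrightarrow> 0 < u b c"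
begin

definition min_payoff :: real where
  "min_payoff = Min ((\<lambda>(b, c). u b c) ` (types A \<times> types A))"

definition max_payoff :: real where
  "max_payoff = Max ((\<lambda>(b, c). u b c) ` (types A \<times> types A))"

lemma min_payoff_le: "b \<in> types A \<Longrightarrow> c \<in> types A \<Longrightarrow> min_payoff \<le> u b c"
  unfolding min_payoff_def by (rule Min_le) (auto intro: image_eqI[of _ _ "(b, c)"])

lemma max_payoff_ge: "b \<in> types A \<Longrightarrow> c \<in> types A \<Longrightarrow> u b c \<le> max_payoff"
  unfolding max_payoff_def by (rule Max_ge) (auto intro: image_eqI[of _ _ "(b, c)"])

lemma min_payoff_pos: "types A \<noteq> {} \<Longrightarrow> 0 < min_payoff"
  unfolding min_payoff_def by (subst Min_gr_iff) (auto intro: payoff_pos)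

lemma max_payoff_nonneg: "a \<in> types A \<Longrightarrow> 0 \<le> max_payoff"
  using max_payoff_ge[of a a] payoff_pos[of a a] by linarith

lemma payoff_vs_nonneg:
  assumes "x \<in> state_simplex A" and "b \<in> types A"
  shows "0 \<le> payoff_vs A u x b"
  unfolding payoff_vs_def
  by (intro sum_nonneg mult_nonneg_nonneg state_simplex_nonneg[OF assms(1)])
    (use payoff_pos[OF assms(2)] in \<open>auto intro: less_imp_le\<close>)

lemma payoff_vs_ge:
  assumes "x \<in> state_simplex A" and "a \<in> types A" and "c \<in> types A"
  shows "x a * u c a \<le> payoff_vs A u x c"
  unfolding payoff_vs_def
  by (rule member_le_sum[OF assms(2)])
    (use state_simplex_nonneg[OF assms(1)] payoff_pos[OF assms(3)]
      in \<open>auto intro: mult_nonneg_nonneg less_imp_le\<close>)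

lemma payoff_vs_le_max_payoff:
  assumes "x \<in> state_simplex A" and "b \<in> types A"
  shows "payoff_vs A u x b \<le> max_payoff"
proof -
  have "payoff_vs A u x b \<le> (\<Sum>c\<in>types A. x c * max_payoff)"
    unfolding payoff_vs_def
    by (intro sum_mono mult_left_mono max_payoff_ge[OF assms(2)] state_simplex_nonneg[OF assms(1)])
      auto
  also have "\<dots> = max_payoff"
    using state_simplex_sum[OF assms(1)] by (simp add: sum_distrib_right[symmetric])
  finally show ?thesis .
qed

lemma mean_payoff_ge_min_payoff:
  assumes "x \<in> state_simplex A"
  shows "min_payoff \<le> mean_payoff A u x"
proof -
  have "(\<Sum>b\<in>types A. x b * (\<Sum>c\<in>types A. x c * min_payoff)) \<le> mean_payoff A u x"
    unfolding mean_payoff_def payoff_vs_def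
    by (intro sum_mono mult_left_mono min_payoff_le state_simplex_nonneg[OF assms]) auto
  moreover have "(\<Sum>b\<in>types A. x b * (\<Sum>c\<in>types A. x c * min_payoff)) = min_payoff"
    using state_simplex_sum[OF assms]
    by (simp add: sum_distrib_right[symmetric] sum_distrib_left[symmetric])
  ultimately show ?thesis by simp
qed

lemma mean_payoff_pos: "x \<in> state_simplex A \<Longrightarrow> 0 < mean_payoff A u x"
  using mean_payoff_ge_min_payoff min_payoff_pos types_nonempty_of_state_simplex
  by (meson less_le_trans)

lemma trait_weighted_payoff_ge:
  assumes "x \<in> state_simplex A" and "b \<in> types A"
  shows "x b * payoff_vs A u x b \<le> trait_weighted_payoff A u x d (b d)"
  unfolding trait_weighted_payoff_def
  by (rule member_le_sum)
    (use assms state_simplex_nonneg[OF assms(1)] payoff_vs_nonneg[OF assms(1)] in auto)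

lemma trait_weighted_payoff_nonneg:
  "x \<in> state_simplex A \<Longrightarrow> 0 \<le> trait_weighted_payoff A u x d t"
  unfolding trait_weighted_payoff_def
  by (rule sum_nonneg) (simp add: state_simplex_nonneg payoff_vs_nonneg)

end

section \<open>Solutions of the recombinator dynamics\<close>

definition state_simplex_vec :: "('d::finite \<Rightarrow> 't::finite set) \<Rightarrow> (real ^ ('d \<Rightarrow> 't)) set" where
  "state_simplex_vec A = {v. vec_nth v \<in> state_simplex A}"

lemma state_simplex_vec_eq:
  "state_simplex_vec A = {v. (\<forall>b. 0 \<le> v $ b) \<and> (\<forall>b. b \<notin> types A \<longrightarrow> v $ b = 0)
     \<and> (\<Sum>b\<in>types A. v $ b) = 1}"
  by (simp add: state_simplex_vec_def state_simplex_def)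

lemma closed_state_simplex_vec: "closed (state_simplex_vec A)"
  unfolding state_simplex_vec_eq
  by (intro closed_Collect_conj closed_Collect_all closed_Collect_imp closed_Collect_le
      closed_Collect_eq continuous_intros open_Collect_const)

lemma convex_state_simplex_vec: "convex (state_simplex_vec A)"
  unfolding convex_def state_simplex_vec_eq
  by (auto simp: sum.distrib sum_distrib_left[symmetric])

lemma abs_vec_nth_le_one: "v \<in> state_simplex_vec A \<Longrightarrow> \<bar>v $ b\<bar> \<le> 1"
  using state_simplex_le_one[of "vec_nth v" A b] state_simplex_nonneg[of "vec_nth v" A b]
  by (simp add: state_simplex_vec_def)

lemma relaxation_ode_stays_in_state_simplex_vec:
  assumes deriv: "\<And>t. 0 \<le> t \<Longrightarrow> (X has_vector_derivative G (X t) - X t) (at t within {0..})"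
    and G: "\<And>v. G v \<in> state_simplex_vec A" and X0: "X 0 \<in> state_simplex_vec A" and "0 \<le> t"
  shows "X t \<in> state_simplex_vec A"
proof -
  have deriv_nth: "((\<lambda>s. X s $ b) has_real_derivative G (X s) $ b - X s $ b) (at s within {0..})"
    if "0 \<le> s" for s b
    using bounded_linear.has_vector_derivative[OF bounded_linear_vec_nth deriv[OF that]]
    by (simp add: has_real_derivative_iff_has_vector_derivative)
  have G_nth: "0 \<le> G v $ b" "b \<notin> types A \<Longrightarrow> G v $ b = 0" for v b
    using G[of v] by (auto simp: state_simplex_vec_eq)
  have X0_nth: "0 \<le> X 0 $ b" "b \<notin> types A \<Longrightarrow> X 0 $ b = 0" for b
    using X0 by (auto simp: state_simplex_vec_eq)
  have "X 0 $ b \<le> exp (1 * t) * X t $ b" for b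
    by (rule exp_weighted_lower_bound[OF deriv_nth _ \<open>0 \<le> t\<close>]) (simp_all add: G_nth)
  then have "0 \<le> X t $ b" for b
    using X0_nth(1)[of b] by (smt (verit) exp_gt_zero zero_le_mult_iff)
  moreover have "X t $ b = 0" if "b \<notin> types A" for b
  proof -
    have "X t $ b = 0 + exp (- t) * (X 0 $ b - 0)"
      by (rule relaxation_ode_solution[OF _ \<open>0 \<le> t\<close>])
        (use deriv_nth[of _ b] G_nth(2)[OF that] in simp)
    then show ?thesis using X0_nth(2)[OF that] by simp
  qed
  moreover have "(\<Sum>b\<in>types A. X t $ b) = 1"
  proof -
    have "((\<lambda>s. \<Sum>b\<in>types A. X s $ b) has_real_derivative 1 - (\<Sum>b\<in>types A. X s $ b))
      (at s within {0..})" if "0 \<le> s" for s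
    proof -
      have "((\<lambda>s. \<Sum>b\<in>types A. X s $ b) has_real_derivative
          (\<Sum>b\<in>types A. G (X s) $ b - X s $ b)) (at s within {0..})"
        by (rule DERIV_sum) (rule deriv_nth[OF that])
      then show ?thesis using G[of "X s"] by (simp add: sum_subtractf state_simplex_vec_eq)
    qed
    from relaxation_ode_solution[OF this \<open>0 \<le> t\<close>] show ?thesis
      using X0 by (simp add: state_simplex_vec_eq)
  qed
  ultimately show ?thesis by (simp add: state_simplex_vec_eq)
qed

text \<open>The dynamics read \<open>x' = recomb_map x - x\<close>: \<open>recomb_map\<close> is the state reached after one
  round of selection and recombination.\<close>

definition recomb_map :: "('d::finite \<Rightarrow> 't::finite set) \<Rightarrow> (('d \<Rightarrow> 't) \<Rightarrow> ('d \<Rightarrow> 't) \<Rightarrow> real)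
    \<Rightarrow> real \<Rightarrow> real ^ ('d \<Rightarrow> 't) \<Rightarrow> real ^ ('d \<Rightarrow> 't)" where
  "recomb_map A u r v = (\<chi> b. if b \<in> types A then recomb_field A u r (vec_nth v) b + v $ b else 0)"

lemma recomb_map_minus_eq_recomb_field:
  "v \<in> state_simplex_vec A \<Longrightarrow> recomb_map A u r v $ b - v $ b = recomb_field A u r (vec_nth v) b"
  using recomb_field_outside_types[of "vec_nth v" A b u r] state_simplex_outside[of "vec_nth v" A b]
  by (simp add: recomb_map_def state_simplex_vec_def)

context positive_game
begin

lemma recomb_map_in_state_simplex_vec:
  assumes "0 \<le> r" "r \<le> 1" and v: "v \<in> state_simplex_vec A"
  shows "recomb_map A u r v \<in> state_simplex_vec A"
proof -
  let ?x = "vec_nth v"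
  let ?m = "mean_payoff A u ?x"
  have x: "?x \<in> state_simplex A" using v by (simp add: state_simplex_vec_def)
  have m: "0 < ?m" by (rule mean_payoff_pos[OF x])
  have recomb: "(\<Sum>b\<in>types A. \<Prod>d\<in>UNIV. g d (b d)) = (\<Prod>d\<in>UNIV. \<Sum>t\<in>A d. g d t)"
    for g :: "'d \<Rightarrow> 't \<Rightarrow> real"
    using prod_sum_PiE[of UNIV A g] by (simp add: PiE_UNIV_eq_types)
  have "(\<Sum>b\<in>types A. recomb_map A u r v $ b) =
      (1 - r) * ((\<Sum>b\<in>types A. ?x b * payoff_vs A u ?x b) / ?m)
      + r * (\<Prod>d\<in>UNIV. \<Sum>t\<in>A d. trait_weighted_payoff A u ?x d t / ?m)"
    by (simp add: recomb_map_def recomb_field_def sum.distrib sum_distrib_left sum_divide_distrib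
        recomb[symmetric])
  also have "\<dots> = 1"
    using m by (simp add: sum_divide_distrib[symmetric] sum_trait_weighted_payoff
        mean_payoff_def[symmetric])
  finally have "(\<Sum>b\<in>types A. recomb_map A u r v $ b) = 1" .
  moreover have "0 \<le> recomb_map A u r v $ b" for b
  proof (cases "b \<in> types A")
    case True
    have "0 \<le> (1 - r) * (?x b * payoff_vs A u ?x b / ?m)"
      using assms m state_simplex_nonneg[OF x, of b] payoff_vs_nonneg[OF x True] by simp
    moreover have "0 \<le> r * (\<Prod>d\<in>UNIV. trait_weighted_payoff A u ?x d (b d) / ?m)"
      using assms m trait_weighted_payoff_nonneg[OF x] by (simp add: prod_nonneg)
    ultimately show ?thesis using True by (simp add: recomb_map_def recomb_field_def)
  qed (simp add: recomb_map_def)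
  ultimately show ?thesis by (simp add: state_simplex_vec_eq recomb_map_def)
qed

lemma lipschitz_on_recomb_map: "\<exists>L. L-lipschitz_on (state_simplex_vec A) (recomb_map A u r)"
proof -
  let ?S = "state_simplex_vec A"
  note coordinate = bounded_lipschitz_on_vec_nth[OF abs_vec_nth_le_one]
  have payoff: "bounded_lipschitz_on ?S (\<lambda>v. payoff_vs A u (vec_nth v) c)" for c
    unfolding payoff_vs_def
    by (intro bounded_lipschitz_on_sum bounded_lipschitz_on_mult bounded_lipschitz_on_const
        coordinate)
  have mean: "bounded_lipschitz_on ?S (\<lambda>v. mean_payoff A u (vec_nth v))"
    unfolding mean_payoff_def
    by (intro bounded_lipschitz_on_sum bounded_lipschitz_on_mult payoff coordinate)
  have trait: "bounded_lipschitz_on ?S (\<lambda>v. trait_weighted_payoff A u (vec_nth v) d t)" for d t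
    unfolding trait_weighted_payoff_def
    by (intro bounded_lipschitz_on_sum bounded_lipschitz_on_mult payoff coordinate)
  have "bounded_lipschitz_on ?S (\<lambda>v. recomb_map A u r v $ b)" for b
  proof (cases "b \<in> types A")
    case True
    then have "types A \<noteq> {}" by auto
    note divide_mean = bounded_lipschitz_on_divide[OF _ mean min_payoff_pos[OF this]]
    show ?thesis
      unfolding recomb_map_def recomb_field_def using True
      by (simp, intro bounded_lipschitz_on_add bounded_lipschitz_on_diff bounded_lipschitz_on_mult
          bounded_lipschitz_on_const bounded_lipschitz_on_prod divide_mean coordinate payoff trait)
        (auto intro: mean_payoff_ge_min_payoff simp: state_simplex_vec_def)
  qed (simp add: recomb_map_def bounded_lipschitz_on_const)
  from lipschitz_on_vec_lambda[of ?S "\<lambda>b v. recomb_map A u r v $ b", OF this] show ?thesis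
    by simp
qed

lemma recomb_solution_exists:
  assumes r: "0 \<le> r" "r \<le> 1" and x0: "x0 \<in> state_simplex A"
  shows "\<exists>x. x 0 = x0 \<and> recomb_solution A u r x \<and> (\<forall>t\<ge>0. x t \<in> state_simplex A)"
proof -
  let ?S = "state_simplex_vec A"
  define P where "P = closest_point ?S"
  have "vec_nth (vec_lambda x0) = x0" by (simp add: fun_eq_iff)
  then have v0: "vec_lambda x0 \<in> ?S" using x0 by (simp add: state_simplex_vec_def)
  then have ne: "?S \<noteq> {}" by blast
  have P: "P v \<in> ?S" for v
    unfolding P_def by (rule closest_point_in_set[OF closed_state_simplex_vec ne])
  have "1-lipschitz_on UNIV P"
    unfolding P_def
    by (rule lipschitz_onI) (simp_all add:
        closest_point_lipschitz[OF convex_state_simplex_vec closed_state_simplex_vec ne])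
  moreover obtain L where "L-lipschitz_on ?S (recomb_map A u r)"
    using lipschitz_on_recomb_map by blast
  ultimately have "(L * 1)-lipschitz_on UNIV (\<lambda>v. recomb_map A u r (P v))"
    by (intro lipschitz_on_compose2) (auto intro: lipschitz_on_subset P)
  then have "(L + 1)-lipschitz_on UNIV (\<lambda>v. recomb_map A u r (P v) - v)"
    using lipschitz_on_diff[OF _ lipschitz_on_id] by fastforce
  then interpret lipschitz_vector_field "\<lambda>v. recomb_map A u r (P v) - v" "L + 1"
    by unfold_locales
  obtain X where X0: "X 0 = vec_lambda x0"
    and X': "\<And>t. 0 \<le> t \<Longrightarrow> (X has_vector_derivative recomb_map A u r (P (X t)) - X t)
      (at t within {0..})"
    using solution_exists by blast
  have XS: "X t \<in> ?S" if "0 \<le> t" for t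
    by (rule relaxation_ode_stays_in_state_simplex_vec[OF X' _ _ that])
      (use recomb_map_in_state_simplex_vec[OF r P(1)] X0 v0 in auto)
  have "((\<lambda>s. X s $ b) has_real_derivative recomb_field A u r (vec_nth (X t)) b)
      (at t within {0..})" if "0 \<le> t" for t b
    using bounded_linear.has_vector_derivative[OF bounded_linear_vec_nth X'[OF that], of b]
      recomb_map_minus_eq_recomb_field[OF XS[OF that]] closest_point_self[OF XS[OF that]]
    by (simp add: P_def has_real_derivative_iff_has_vector_derivative)
  moreover have "vec_nth (X 0) = x0" using X0 by (simp add: fun_eq_iff)
  ultimately show ?thesis
    using XS by (intro exI[of _ "\<lambda>t. vec_nth (X t)"] conjI allI impI)
      (simp_all add: recomb_solution_def state_simplex_vec_def)
qed

end

section \<open>Invasion and instability\<close>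

lemma mixture_pure_states_mem_state_simplex:
  fixes A :: "'d::finite \<Rightarrow> 't::finite set"
  assumes "a \<in> types A" "a' \<in> types A" "a' \<noteq> a" "0 \<le> \<eta>" "\<eta> \<le> 1"
  shows "(\<lambda>b. (1 - \<eta>) * pure_state a b + \<eta> * pure_state a' b) \<in> state_simplex A"
proof -
  have "(\<Sum>b\<in>types A. (1 - \<eta>) * pure_state a b + \<eta> * pure_state a' b)
      = (1 - \<eta>) * (\<Sum>b\<in>types A. pure_state a b) + \<eta> * (\<Sum>b\<in>types A. pure_state a' b)"
    by (simp add: sum.distrib sum_distrib_left)
  also have "\<dots> = 1" using assms by (simp add: pure_state_def)
  finally show ?thesis using assms by (auto simp: state_simplex_def pure_state_def)
qed

lemma small_mixture_mem_open:
  assumes "open V" and "pure_state a \<in> V"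
  obtains \<eta> where "0 < \<eta>" "\<eta> < 1" "(\<lambda>b. (1 - \<eta>) * pure_state a b + \<eta> * pure_state a' b) \<in> V"
proof -
  define p where "p \<eta> = (\<lambda>b. (1 - \<eta>) * pure_state a b + \<eta> * pure_state a' b)" for \<eta> :: real
  have "continuous_on UNIV p"
    unfolding p_def by (intro continuous_on_coordinatewise_then_product continuous_intros)
  then have "open (p -` V)" using assms(1) by (simp add: open_vimage)
  moreover have "0 \<in> p -` V" using assms(2) by (simp add: p_def)
  ultimately obtain e where e: "0 < e" "ball 0 e \<subseteq> p -` V" unfolding open_contains_ball by blast
  define \<eta> where "\<eta> = min (e / 2) (1 / 2)"
  have "\<eta> \<in> ball 0 e" "0 < \<eta>" "\<eta> < 1" using e by (auto simp: \<eta>_def dist_real_def)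
  moreover from this(1) have "p \<eta> \<in> V" using e(2) by blast
  ultimately show ?thesis using that[of \<eta>] by (simp add: p_def)
qed

context positive_game
begin

lemma not_lyapunov_stable_of_invasion:
  assumes r: "0 \<le> r" "r \<le> 1" and a: "a \<in> types A" and a': "a' \<in> types A" "a' \<noteq> a"
    and "0 < \<epsilon>" and "0 < \<delta>"
    and invasion: "\<And>y. y \<in> state_simplex A \<Longrightarrow> 1 - \<epsilon> < y a \<Longrightarrow>
      \<delta> * y a' \<le> recomb_field A u r y a'"
  shows "\<not> lyapunov_stable A u r (pure_state a)"
proof
  assume "lyapunov_stable A u r (pure_state a)"
  moreover have "open {x. 1 - \<epsilon> < x a}"
    by (rule open_Collect_less[OF continuous_on_const continuous_on_product_coordinates])
  moreover have "pure_state a \<in> {x. 1 - \<epsilon> < x a}" using \<open>0 < \<epsilon>\<close> by (simp add: pure_state_def)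
  ultimately obtain V where V: "open V" "pure_state a \<in> V" "V \<subseteq> {x. 1 - \<epsilon> < x a}"
    and stays: "\<And>x. recomb_solution A u r x \<Longrightarrow> x 0 \<in> V \<inter> state_simplex A \<Longrightarrow>
      \<forall>t>0. 1 - \<epsilon> < x t a"
    unfolding lyapunov_stable_def by (metis mem_Collect_eq)
  obtain \<eta> where \<eta>: "0 < \<eta>" "\<eta> < 1"
    and V\<eta>: "(\<lambda>b. (1 - \<eta>) * pure_state a b + \<eta> * pure_state a' b) \<in> V"
    using small_mixture_mem_open[OF V(1,2)] by blast
  obtain x where x0: "x 0 = (\<lambda>b. (1 - \<eta>) * pure_state a b + \<eta> * pure_state a' b)"
    and x: "recomb_solution A u r x" "\<And>t. 0 \<le> t \<Longrightarrow> x t \<in> state_simplex A"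
    using recomb_solution_exists[OF r mixture_pure_states_mem_state_simplex[OF a a'], of \<eta>] \<eta>
    by auto
  have near: "1 - \<epsilon> < x t a" if "0 \<le> t" for t
    using stays[OF x(1)] x0 V\<eta> V(3) x(2)[of 0] that by (cases "t = 0") auto
  have "\<exists>T\<ge>0. 1 < x T a'"
  proof (rule exists_gt_one_of_exponential_growth[OF _ invasion[OF x(2) near] \<open>0 < \<delta>\<close>])
    show "((\<lambda>t. x t a') has_real_derivative recomb_field A u r (x s) a') (at s within {0..})"
      if "0 \<le> s" for s
      using x(1) that by (simp add: recomb_solution_def)
    show "0 < x 0 a'" using x0 a'(2) \<eta> by (simp add: pure_state_def)
  qed
  then obtain T where "0 \<le> T" "1 < x T a'" by blast
  then show False using state_simplex_le_one[OF x(2)[OF \<open>0 \<le> T\<close>], of a'] by simp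
qed

lemma not_lyapunov_stable_of_invasion_limit:
  assumes r: "0 \<le> r" "r \<le> 1" and a: "a \<in> types A" and a': "a' \<in> types A" "a' \<noteq> a"
    and lim: "(\<phi> \<longlongrightarrow> l) (at_right 0)" and "1 < l"
    and invasion: "\<And>\<epsilon> y. 0 < \<epsilon> \<Longrightarrow> \<epsilon> < 1 \<Longrightarrow> y \<in> state_simplex A \<Longrightarrow> 1 - \<epsilon> < y a \<Longrightarrow>
      y a' * (\<phi> \<epsilon> - 1) \<le> recomb_field A u r y a'"
  shows "\<not> lyapunov_stable A u r (pure_state a)"
proof -
  define \<delta> where "\<delta> = (l - 1) / 2"
  have "\<forall>\<^sub>F \<epsilon> in at_right 0. 1 + \<delta> < \<phi> \<epsilon>"
    by (rule order_tendstoD(1)[OF lim]) (use \<open>1 < l\<close> in \<open>simp add: \<delta>_def field_simps\<close>)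
  then obtain e where e: "0 < e" "\<And>\<epsilon>. 0 < \<epsilon> \<Longrightarrow> \<epsilon> < e \<Longrightarrow> 1 + \<delta> < \<phi> \<epsilon>"
    unfolding eventually_at_right_field by auto
  define \<epsilon> where "\<epsilon> = min (e / 2) (1 / 2)"
  have \<epsilon>: "0 < \<epsilon>" "\<epsilon> < 1" "\<epsilon> < e" using e(1) by (auto simp: \<epsilon>_def)
  then have "\<delta> < \<phi> \<epsilon> - 1" using e(2)[of \<epsilon>] by simp
  show ?thesis
  proof (rule not_lyapunov_stable_of_invasion[OF r a a' \<epsilon>(1)])
    show "0 < \<delta>" using \<open>1 < l\<close> by (simp add: \<delta>_def)
    fix y assume y: "y \<in> state_simplex A" "1 - \<epsilon> < y a"
    have "\<delta> * y a' \<le> y a' * (\<phi> \<epsilon> - 1)"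
      using \<open>\<delta> < \<phi> \<epsilon> - 1\<close> state_simplex_nonneg[OF y(1), of a']
      by (metis less_imp_le mult.commute mult_left_mono)
    then show "\<delta> * y a' \<le> recomb_field A u r y a'" using invasion[OF \<epsilon>(1,2) y] by linarith
  qed
qed

lemma mean_payoff_le:
  assumes y: "y \<in> state_simplex A" and a: "a \<in> types A"
  shows "mean_payoff A u y \<le> u a a + 2 * (1 - y a) * max_payoff"
proof -
  let ?M = "max_payoff" and ?p = "payoff_vs A u y"
  have M: "0 \<le> ?M" by (rule max_payoff_nonneg[OF a])
  have ya: "0 \<le> y a" "y a \<le> 1" using state_simplex_nonneg[OF y] state_simplex_le_one[OF y] by auto
  have rest: "(\<Sum>b\<in>types A - {a}. y b * f b) \<le> (1 - y a) * ?M"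
    if "\<And>b. b \<in> types A \<Longrightarrow> f b \<le> ?M" for f
  proof -
    have "(\<Sum>b\<in>types A - {a}. y b * f b) \<le> (\<Sum>b\<in>types A - {a}. y b * ?M)"
      by (intro sum_mono mult_left_mono that state_simplex_nonneg[OF y]) auto
    also have "\<dots> = (1 - y a) * ?M"
      using state_simplex_sum_remove[OF y a] by (simp add: sum_distrib_right[symmetric])
    finally show ?thesis .
  qed
  have "?p a = y a * u a a + (\<Sum>c\<in>types A - {a}. y c * u a c)"
    unfolding payoff_vs_def using sum.remove[OF finite_types a, of "\<lambda>c. y c * u a c"] by simp
  also have "\<dots> \<le> y a * u a a + (1 - y a) * ?M"
    using rest[of "u a"] max_payoff_ge[OF a] by simp
  finally have pa: "?p a \<le> y a * u a a + (1 - y a) * ?M" .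
  have "mean_payoff A u y = y a * ?p a + (\<Sum>b\<in>types A - {a}. y b * ?p b)"
    unfolding mean_payoff_def using sum.remove[OF finite_types a, of "\<lambda>b. y b * ?p b"] by simp
  also have "\<dots> \<le> y a * (y a * u a a + (1 - y a) * ?M) + (1 - y a) * ?M"
    using rest[of ?p] payoff_vs_le_max_payoff[OF y] mult_left_mono[OF pa ya(1)] by simp
  also have "\<dots> \<le> u a a + 2 * (1 - y a) * ?M"
  proof -
    have "y a * (y a * u a a) \<le> u a a"
      using ya payoff_pos[OF a a] by (simp add: mult_le_one mult_left_le_one_le)
    moreover have "y a * ((1 - y a) * ?M) \<le> (1 - y a) * ?M"
      using ya M by (simp add: mult_left_le_one_le)
    ultimately show ?thesis by (simp add: algebra_simps)
  qed
  finally show ?thesis .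
qed

definition invasion_factor :: "('d \<Rightarrow> 't) \<Rightarrow> ('d \<Rightarrow> 't) \<Rightarrow> real \<Rightarrow> real" where
  "invasion_factor a a' \<epsilon> = (1 - \<epsilon>) * u a' a / (u a a + 2 * \<epsilon> * max_payoff)"

lemma invasion_factor_tendsto:
  assumes "a \<in> types A"
  shows "(invasion_factor a a' \<longlongrightarrow> u a' a / u a a) (at_right 0)"
proof -
  have "(invasion_factor a a' \<longlongrightarrow> (1 - 0) * u a' a / (u a a + 2 * 0 * max_payoff)) (at_right 0)"
    unfolding invasion_factor_def[abs_def]
    by (intro tendsto_intros) (use payoff_pos[OF assms assms] in auto)
  then show ?thesis by simp
qed

lemma invasion_factor_self_le_one:
  assumes "a \<in> types A" and "0 < \<epsilon>" and "\<epsilon> < 1"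
  shows "0 \<le> invasion_factor a a \<epsilon>" "invasion_factor a a \<epsilon> \<le> 1"
proof -
  have "0 \<le> \<epsilon> * max_payoff" "0 < \<epsilon> * u a a" "0 < u a a"
    using assms payoff_pos[OF assms(1,1)] max_payoff_nonneg[OF assms(1)] by simp_all
  then have "0 < u a a + 2 * \<epsilon> * max_payoff" "(1 - \<epsilon>) * u a a \<le> u a a + 2 * \<epsilon> * max_payoff"
    by (simp_all add: algebra_simps)
  then show "0 \<le> invasion_factor a a \<epsilon>" "invasion_factor a a \<epsilon> \<le> 1"
    using assms(3) payoff_pos[OF assms(1,1)] by (simp_all add: invasion_factor_def)
qed

lemma relative_payoff_ge_invasion_factor:
  assumes y: "y \<in> state_simplex A" and a: "a \<in> types A" and a': "a' \<in> types A"
    and "0 < \<epsilon>" and ya: "1 - \<epsilon> < y a"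
  shows "invasion_factor a a' \<epsilon> \<le> payoff_vs A u y a' / mean_payoff A u y"
  unfolding invasion_factor_def
proof (rule frac_le[OF payoff_vs_nonneg[OF y a'] _ mean_payoff_pos[OF y]])
  show "(1 - \<epsilon>) * u a' a \<le> payoff_vs A u y a'"
    using ya payoff_pos[OF a' a] payoff_vs_ge[OF y a a']
    by (smt (verit, best) mult_right_mono)
  show "mean_payoff A u y \<le> u a a + 2 * \<epsilon> * max_payoff"
    using mean_payoff_le[OF y a] ya max_payoff_nonneg[OF a]
    by (smt (verit, best) mult_right_mono)
qed

lemma recomb_field_ge_selection:
  assumes "0 \<le> r" "r \<le> 1" and a: "a \<in> types A" and a': "a' \<in> types A"
    and "0 < \<epsilon>" and y: "y \<in> state_simplex A" and ya: "1 - \<epsilon> < y a"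
  shows "y a' * ((1 - r) * invasion_factor a a' \<epsilon> - 1) \<le> recomb_field A u r y a'"
proof -
  have "0 \<le> r * (\<Prod>d\<in>UNIV. trait_weighted_payoff A u y d (a' d) / mean_payoff A u y)"
    using assms mean_payoff_pos[OF y] trait_weighted_payoff_nonneg[OF y] by (simp add: prod_nonneg)
  moreover have "(1 - r) * (y a' * invasion_factor a a' \<epsilon>)
      \<le> (1 - r) * (y a' * (payoff_vs A u y a' / mean_payoff A u y))"
    using relative_payoff_ge_invasion_factor[OF y a a' \<open>0 < \<epsilon>\<close> ya] state_simplex_nonneg[OF y]
      assms(2) by (intro mult_left_mono) auto
  ultimately show ?thesis by (simp add: recomb_field_def algebra_simps)
qed

lemma recombination_term_ge:
  assumes a: "a \<in> types A" and t: "t \<in> A d" and "0 < \<epsilon>" "\<epsilon> < 1"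
    and y: "y \<in> state_simplex A" and ya: "1 - \<epsilon> < y a"
  shows "y (a(d := t)) * payoff_vs A u y (a(d := t)) / mean_payoff A u y
      * ((1 - \<epsilon>) * invasion_factor a a \<epsilon>) ^ (CARD('d) - 1)
    \<le> (\<Prod>d'\<in>UNIV. trait_weighted_payoff A u y d' ((a(d := t)) d') / mean_payoff A u y)"
proof -
  let ?m = "mean_payoff A u y" and ?q = "(1 - \<epsilon>) * invasion_factor a a \<epsilon>"
  let ?Z = "y (a(d := t)) * payoff_vs A u y (a(d := t)) / ?m"
  let ?F = "\<lambda>d'. trait_weighted_payoff A u y d' ((a(d := t)) d') / ?m"
  have m: "0 < ?m" by (rule mean_payoff_pos[OF y])
  have a': "a(d := t) \<in> types A" using a t by (auto simp: types_def)
  have "0 \<le> ?Z" using state_simplex_nonneg[OF y] payoff_vs_nonneg[OF y a'] m by simp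
  moreover have "?Z \<le> ?F d"
    using trait_weighted_payoff_ge[OF y a', of d] m by (simp add: divide_right_mono)
  moreover note factor = invasion_factor_self_le_one(1)[OF a \<open>0 < \<epsilon>\<close> \<open>\<epsilon> < 1\<close>]
  moreover have "0 \<le> ?q" using factor \<open>\<epsilon> < 1\<close> by simp
  moreover have "?q \<le> ?F d'" if "d' \<noteq> d" for d'
  proof -
    have "?q \<le> y a * invasion_factor a a \<epsilon>"
      using ya factor by (intro mult_right_mono) auto
    also have "\<dots> \<le> y a * (payoff_vs A u y a / ?m)"
      using relative_payoff_ge_invasion_factor[OF y a a \<open>0 < \<epsilon>\<close> ya] state_simplex_nonneg[OF y]
      by (intro mult_left_mono) auto
    also have "\<dots> \<le> ?F d'"
      using trait_weighted_payoff_ge[OF y a, of d'] m that by (simp add: divide_right_mono)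
    finally show ?thesis .
  qed
  ultimately have "(\<Prod>d'\<in>UNIV. if d' = d then ?Z else ?q) \<le> (\<Prod>d'\<in>UNIV. ?F d')"
    by (intro prod_mono) (auto simp del: fun_upd_apply)
  moreover have "(\<Prod>d'\<in>UNIV. if d' = d then ?Z else ?q) = ?Z * ?q ^ (CARD('d) - 1)"
    by (simp add: prod.If_cases Compl_eq_Diff_UNIV card_Diff_singleton)
  ultimately show ?thesis by simp
qed

lemma recomb_field_ge_single_trait_mutant:
  assumes "0 \<le> r" "r \<le> 1" and a: "a \<in> types A" and t: "t \<in> A d"
    and "0 < \<epsilon>" "\<epsilon> < 1" and y: "y \<in> state_simplex A" and ya: "1 - \<epsilon> < y a"
  shows "y (a(d := t)) * (invasion_factor a (a(d := t)) \<epsilon>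
      * ((1 - \<epsilon>) * invasion_factor a a \<epsilon>) ^ (CARD('d) - 1) - 1)
    \<le> recomb_field A u r y (a(d := t))"
proof -
  let ?a' = "a(d := t)" and ?m = "mean_payoff A u y"
  let ?Z = "y ?a' * payoff_vs A u y ?a' / ?m"
  let ?P = "\<Prod>d'\<in>UNIV. trait_weighted_payoff A u y d' (?a' d') / ?m"
  let ?k = "((1 - \<epsilon>) * invasion_factor a a \<epsilon>) ^ (CARD('d) - 1)"
  have affine_split: "X = (1 - r) * X + r * X" for X :: real by (simp add: algebra_simps)
  have a': "?a' \<in> types A" using a t by (auto simp: types_def)
  note factor = invasion_factor_self_le_one[OF a \<open>0 < \<epsilon>\<close> \<open>\<epsilon> < 1\<close>]
  have "0 \<le> (1 - \<epsilon>) * invasion_factor a a \<epsilon>"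
    using factor \<open>\<epsilon> < 1\<close> by (intro mult_nonneg_nonneg) simp_all
  moreover have "(1 - \<epsilon>) * invasion_factor a a \<epsilon> \<le> 1"
    using factor \<open>0 < \<epsilon>\<close> by (intro mult_le_one) simp_all
  ultimately have k: "0 \<le> ?k" "?k \<le> 1" by (simp_all add: power_le_one)
  have "y ?a' * invasion_factor a ?a' \<epsilon> \<le> y ?a' * (payoff_vs A u y ?a' / ?m)"
    using relative_payoff_ge_invasion_factor[OF y a a' \<open>0 < \<epsilon>\<close> ya] state_simplex_nonneg[OF y]
    by (rule mult_left_mono)
  then have "y ?a' * invasion_factor a ?a' \<epsilon> * ?k \<le> ?Z * ?k"
    using mult_right_mono[OF _ k(1)] by (simp only: times_divide_eq_right)
  also have "\<dots> = (1 - r) * (?Z * ?k) + r * (?Z * ?k)"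
    using affine_split[of "?Z * ?k"] .
  also have "\<dots> \<le> (1 - r) * ?Z + r * ?P"
  proof (rule add_mono)
    have "0 \<le> ?Z" using state_simplex_nonneg[OF y] payoff_vs_nonneg[OF y a'] mean_payoff_pos[OF y]
      by simp
    then have "?Z * ?k \<le> ?Z" using k(2) by (rule mult_left_le[rotated])
    then show "(1 - r) * (?Z * ?k) \<le> (1 - r) * ?Z"
      using assms(2) by (intro mult_left_mono) simp_all
    show "r * (?Z * ?k) \<le> r * ?P"
      using recombination_term_ge[OF a t \<open>0 < \<epsilon>\<close> \<open>\<epsilon> < 1\<close> y ya] assms(1)
      by (rule mult_left_mono)
  qed
  finally have "y ?a' * invasion_factor a ?a' \<epsilon> * ?k \<le> (1 - r) * ?Z + r * ?P" .
  moreover have "recomb_field A u r y ?a' = (1 - r) * ?Z + r * ?P - y ?a'"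
    by (simp add: recomb_field_def)
  moreover have "y ?a' * (invasion_factor a ?a' \<epsilon> * ?k - 1)
      = y ?a' * invasion_factor a ?a' \<epsilon> * ?k - y ?a'"
    by (simp add: algebra_simps)
  ultimately show ?thesis by linarith
qed

lemma single_trait_mutant_payoff_le_of_stable:
  assumes r: "0 \<le> r" "r \<le> 1" and a: "a \<in> types A" and t: "t \<in> A d"
    and stable: "lyapunov_stable A u r (pure_state a)"
  shows "u (a(d := t)) a \<le> u a a"
proof (rule ccontr)
  assume "\<not> u (a(d := t)) a \<le> u a a"
  then have a': "a(d := t) \<in> types A" "a(d := t) \<noteq> a" and gt: "1 < u (a(d := t)) a / u a a"
    using a t payoff_pos[OF a a] by (auto simp: types_def)
  have "((\<lambda>\<epsilon>. invasion_factor a (a(d := t)) \<epsilon>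
      * ((1 - \<epsilon>) * invasion_factor a a \<epsilon>) ^ (CARD('d) - 1))
    \<longlongrightarrow> u (a(d := t)) a / u a a * ((1 - 0) * (u a a / u a a)) ^ (CARD('d) - 1)) (at_right 0)"
    by (intro tendsto_intros invasion_factor_tendsto a)
  then have "((\<lambda>\<epsilon>. invasion_factor a (a(d := t)) \<epsilon>
      * ((1 - \<epsilon>) * invasion_factor a a \<epsilon>) ^ (CARD('d) - 1))
    \<longlongrightarrow> u (a(d := t)) a / u a a) (at_right 0)"
    using payoff_pos[OF a a] by simp
  from not_lyapunov_stable_of_invasion_limit[OF r a a' this gt
      recomb_field_ge_single_trait_mutant[OF r a t]]
  show False using stable by blast
qed

lemma mutant_payoff_le_of_stable:
  assumes r: "0 \<le> r" "r \<le> 1" and a: "a \<in> types A" and a': "a' \<in> types A"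
    and stable: "lyapunov_stable A u r (pure_state a)"
  shows "(1 - r) * u a' a \<le> u a a"
proof (rule ccontr)
  assume "\<not> (1 - r) * u a' a \<le> u a a"
  then have "a' \<noteq> a" and gt: "1 < (1 - r) * (u a' a / u a a)"
    using r payoff_pos[OF a a] by (auto simp: mult_le_cancel_right1 field_simps)
  have "((\<lambda>\<epsilon>. (1 - r) * invasion_factor a a' \<epsilon>) \<longlongrightarrow> (1 - r) * (u a' a / u a a)) (at_right 0)"
    by (intro tendsto_intros invasion_factor_tendsto a)
  from not_lyapunov_stable_of_invasion_limit[OF r a a' \<open>a' \<noteq> a\<close> this gt]
  show False using stable recomb_field_ge_selection[OF r a a'] by blast
qed

end

theorem corollary1:
  fixes A :: "'d::finite \<Rightarrow> 't::finite set"
    and u :: "('d \<Rightarrow> 't) \<Rightarrow> ('d \<Rightarrow> 't) \<Rightarrow> real"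
    and r :: real and a :: "'d \<Rightarrow> 't"
  assumes "CARD('d) \<ge> 2"
    and "\<And>b c. b \<in> types A \<Longrightarrow> c \<in> types A \<Longrightarrow> u b c > 0"
    and "0 \<le> r" and "r \<le> 1"
    and "a \<in> types A"
    and "lyapunov_stable A u r (pure_state a)"
  shows "(\<forall>d. \<forall>t\<in>A d. u a a \<ge> u (a(d := t)) a)
       \<and> (\<forall>a'\<in>types A. u a a \<ge> (1 - r) * u a' a)"
proof -
  interpret positive_game A u using assms(2) by unfold_locales
  show ?thesis
    using single_trait_mutant_payoff_le_of_stable[OF assms(3-5) _ assms(6)]
      mutant_payoff_le_of_stable[OF assms(3-5) _ assms(6)] by blast
qed

end
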